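(* Let $(X,\mu),(Y,\nu)$ be $\sigma$-finite measure spaces and $\varphi\colon\mathcal B(X,\mu)\to\mathcal B(Y,\nu)$ a conformal homomorphism. Then for every $k\in\mathbb N$ and $\varepsilon>0$ there is $\delta>0$ such that for every family $A_1,\dots,A_k$ of measurable subsets of $X$ with $\mu(A_i)\le\delta$ there exists $\lambda>0$ with $|\mu(A_i\cap A_j)-\lambda\nu(\varphi(A_i)\cap\varphi(A_j))|\le\varepsilon\max_{l=1,\dots,k}\mu(A_l)$ for all $i,j=1,\dots,k$.
   Context: A map $\varphi\colon\mathcal B(X,\mu)\to\mathcal B(Y,\nu)$ between measurable sets is a conformal homomorphism if for every $\varepsilon>0$ there is $\delta>0$ such that for all measurable $U,V\subset X$ with $\mu(U),\mu(V)\le\delta$ there is $\lambda>0$ with $|\mu(U)-\lambda\nu(\varphi U)|,\ |\mu(V)-\lambda\nu(\varphi V)|,\ |\mu(U\cap V)-\lambda\nu(\varphi U\cap\varphi V)|$ all at most $\varepsilon\max\{\mu(U),\mu(V)\}$. *)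

theory Defs
  imports "HOL-Analysis.Analysis"
begin

text \<open>Measures are taken as extended reals so that infinite values are handled
  faithfully: a finite quantity minus an infinite one has infinite absolute value.\<close>

definition emeas :: "'a measure \<Rightarrow> 'a set \<Rightarrow> ereal" where
  "emeas M A = enn2ereal (emeasure M A)"

definition conformal_hom :: "'a measure \<Rightarrow> 'b measure \<Rightarrow> ('a set \<Rightarrow> 'b set) \<Rightarrow> bool" where
  "conformal_hom M N \<phi> \<longleftrightarrow>
     (\<forall>U\<in>sets M. \<phi> U \<in> sets N) \<and>
     (\<forall>\<epsilon>::real>0. \<exists>\<delta>::real>0. \<forall>U\<in>sets M. \<forall>V\<in>sets M.
        emeas M U \<le> ereal \<delta> \<longrightarrow> emeas M V \<le> ereal \<delta> \<longrightarrow>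
        (\<exists>c::real>0.
           \<bar>emeas M U - ereal c * emeas N (\<phi> U)\<bar> \<le> ereal \<epsilon> * max (emeas M U) (emeas M V) \<and>
           \<bar>emeas M V - ereal c * emeas N (\<phi> V)\<bar> \<le> ereal \<epsilon> * max (emeas M U) (emeas M V) \<and>
           \<bar>emeas M (U \<inter> V) - ereal c * emeas N (\<phi> U \<inter> \<phi> V)\<bar>
              \<le> ereal \<epsilon> * max (emeas M U) (emeas M V)))"

end

theory Submission
  imports Defs
begin

text \<open>Apply the conformal condition with a tolerance \<open>e\<close> and let \<open>A\<^sub>p\<close> be a member of the
  family of maximal measure \<open>m\<close>. The constant \<open>c\<close> obtained for the pair \<open>(A\<^sub>p, A\<^sub>p)\<close> works
  for all pairs at once: the constant \<open>c''\<close> of the pair \<open>(A\<^sub>i, A\<^sub>j)\<close> approximates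
  \<open>\<mu>(A\<^sub>i \<inter> A\<^sub>j)\<close> within \<open>e m\<close>, and it is linked to \<open>c\<close> through the constant \<open>c'\<close> of
  \<open>(A\<^sub>p, A\<^sub>i)\<close>, because \<open>c'\<close> and \<open>c''\<close> both calibrate \<open>A\<^sub>i\<close> while \<open>c\<close> and \<open>c'\<close> both
  calibrate \<open>A\<^sub>p\<close>. For \<open>e \<le> 1/2\<close> one has \<open>\<nu>(\<phi> A\<^sub>i) \<le> 3 \<nu>(\<phi> A\<^sub>p)\<close>, so the differences of
  these constants, weighted by the relevant \<open>\<nu>\<close>-measures, are \<open>O(e m)\<close> and the errors add up
  to at most \<open>9 e m\<close>.\<close>

text \<open>The condition of \<^const>\<open>conformal_hom\<close> in real-valued measures; it is only used for
  sets of finite measure, as \<^const>\<open>measure\<close> is \<open>0\<close> on sets of infinite measure.\<close>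

definition calibrates ::
    "'a measure \<Rightarrow> 'b measure \<Rightarrow> ('a set \<Rightarrow> 'b set) \<Rightarrow> real \<Rightarrow> 'a set \<Rightarrow> 'a set \<Rightarrow> real \<Rightarrow> bool"
  where "calibrates M N \<phi> e U V c \<longleftrightarrow> c > 0 \<and>
    \<bar>measure M U - c * measure N (\<phi> U)\<bar> \<le> e * max (measure M U) (measure M V) \<and>
    \<bar>measure M V - c * measure N (\<phi> V)\<bar> \<le> e * max (measure M U) (measure M V) \<and>
    \<bar>measure M (U \<inter> V) - c * measure N (\<phi> U \<inter> \<phi> V)\<bar> \<le> e * max (measure M U) (measure M V)"

lemma abs_diff_mult_le:
  fixes a b m p r :: real
  assumes "0 \<le> p" and "\<bar>m - a * p\<bar> \<le> r" and "\<bar>m - b * p\<bar> \<le> r"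
  shows "\<bar>a - b\<bar> * p \<le> 2 * r"
proof -
  have "\<bar>a - b\<bar> * p = \<bar>a * p - b * p\<bar>"
    using assms(1) by (simp add: abs_mult flip: left_diff_distrib)
  then show ?thesis using assms(2,3) by linarith
qed

lemma calibrated_measure_le:
  fixes e m a p x c :: real
  assumes "0 \<le> m" and "e \<le> 1/2" and "c > 0" and "a \<le> m"
    and "\<bar>m - c * p\<bar> \<le> e * m" and "\<bar>a - c * x\<bar> \<le> e * m"
  shows "x \<le> 3 * p"
proof -
  have "0 \<le> (2 - 4 * e) * m" using assms(1,2) by simp
  have "c * x \<le> (1 + e) * m" using assms(4,6) by (simp add: algebra_simps abs_le_iff)
  also have "\<dots> \<le> 3 * ((1 - e) * m)" using \<open>0 \<le> (2 - 4 * e) * m\<close> by (simp add: algebra_simps)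
  also have "\<dots> \<le> 3 * (c * p)" using assms(5) by (simp add: algebra_simps abs_le_iff)
  finally show ?thesis using assms(3) by (simp add: mult.left_commute)
qed

lemma calibration_transfer:
  fixes e m a w p x z c c' c'' :: real
  assumes "0 \<le> m" and "e \<le> 1/2" and "c' > 0" and "a \<le> m" and "0 \<le> p" and "0 \<le> z" and "z \<le> x"
    and "\<bar>m - c * p\<bar> \<le> e * m" and "\<bar>m - c' * p\<bar> \<le> e * m"
    and "\<bar>a - c' * x\<bar> \<le> e * m" and "\<bar>a - c'' * x\<bar> \<le> e * m"
    and "\<bar>w - c'' * z\<bar> \<le> e * m"
  shows "\<bar>w - c * z\<bar> \<le> 9 * e * m"
proof -
  have "x \<le> 3 * p" using assms(1-4,9,10) by (rule calibrated_measure_le)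
  have "\<bar>c' - c\<bar> * p \<le> 2 * (e * m)" using assms(5,9,8) by (rule abs_diff_mult_le)
  then have c_c': "\<bar>c' - c\<bar> * z \<le> 6 * e * m"
    using \<open>x \<le> 3 * p\<close> assms(7) mult_left_mono[of z "3 * p" "\<bar>c' - c\<bar>"] by simp
  have "0 \<le> x" using assms(6,7) by simp
  then have "\<bar>c'' - c'\<bar> * x \<le> 2 * (e * m)" using assms(11,10) by (rule abs_diff_mult_le)
  then have c'_c'': "\<bar>c'' - c'\<bar> * z \<le> 2 * e * m"
    using assms(7) mult_left_mono[of z x "\<bar>c'' - c'\<bar>"] by simp
  have "\<bar>c'' - c'\<bar> * z = \<bar>c'' * z - c' * z\<bar>" "\<bar>c' - c\<bar> * z = \<bar>c' * z - c * z\<bar>"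
    using assms(6) by (simp_all add: abs_mult flip: left_diff_distrib)
  then show ?thesis using assms(12) c_c' c'_c'' by linarith
qed

lemma emeas_fmeasurable: "A \<in> fmeasurable M \<Longrightarrow> emeas M A = ereal (measure M A)"
  by (simp add: emeas_def emeasure_eq_measure2)

lemma fmeasurable_if_emeas_le: "A \<in> sets M \<Longrightarrow> emeas M A \<le> ereal r \<Longrightarrow> A \<in> fmeasurable M"
  by (intro fmeasurableI) (auto simp: emeas_def less_top[symmetric])

lemma emeasure_finite_if_calibrated:
  assumes "c > 0" and "\<bar>ereal a - ereal c * emeas N B\<bar> \<le> ereal r"
  shows "emeasure N B \<noteq> \<infinity>"
  using assms by (auto simp: emeas_def)

lemma conformal_hom_calibrates:
  assumes "conformal_hom M N \<phi>" and "e > 0"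
  obtains \<delta> where "\<delta> > 0"
    and "\<And>U. U \<in> sets M \<Longrightarrow> emeas M U \<le> ereal \<delta> \<Longrightarrow> \<phi> U \<in> fmeasurable N"
    and "\<And>U V. U \<in> sets M \<Longrightarrow> V \<in> sets M \<Longrightarrow> emeas M U \<le> ereal \<delta> \<Longrightarrow> emeas M V \<le> ereal \<delta> \<Longrightarrow>
           \<exists>c. calibrates M N \<phi> e U V c"
proof -
  obtain \<delta> where "\<delta> > 0" and cal: "\<And>U V. U \<in> sets M \<Longrightarrow> V \<in> sets M \<Longrightarrow>
      emeas M U \<le> ereal \<delta> \<Longrightarrow> emeas M V \<le> ereal \<delta> \<Longrightarrow> \<exists>c>0.
        \<bar>emeas M U - ereal c * emeas N (\<phi> U)\<bar> \<le> ereal e * max (emeas M U) (emeas M V) \<and>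
        \<bar>emeas M V - ereal c * emeas N (\<phi> V)\<bar> \<le> ereal e * max (emeas M U) (emeas M V) \<and>
        \<bar>emeas M (U \<inter> V) - ereal c * emeas N (\<phi> U \<inter> \<phi> V)\<bar> \<le> ereal e * max (emeas M U) (emeas M V)"
    using conjunct2[OF assms(1)[unfolded conformal_hom_def], rule_format, OF assms(2)] by blast
  have image: "\<phi> U \<in> fmeasurable N" if U: "U \<in> sets M" "emeas M U \<le> ereal \<delta>" for U
  proof (rule fmeasurableI)
    show "\<phi> U \<in> sets N" using assms(1) U by (simp add: conformal_hom_def)
    obtain c where "c > 0"
      and "\<bar>emeas M U - ereal c * emeas N (\<phi> U)\<bar> \<le> ereal e * max (emeas M U) (emeas M U)"
      using cal[OF U(1) U(1) U(2) U(2)] by blast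
    then have "emeasure N (\<phi> U) \<noteq> \<infinity>"
      using emeas_fmeasurable[OF fmeasurable_if_emeas_le[OF U]]
      by (intro emeasure_finite_if_calibrated[of c "measure M U" N "\<phi> U" "e * measure M U"]) simp_all
    then show "emeasure N (\<phi> U) < \<infinity>" by (simp add: less_top)
  qed
  show thesis
  proof (rule that[OF \<open>\<delta> > 0\<close> image])
    fix U V assume U: "U \<in> sets M" "emeas M U \<le> ereal \<delta>" and V: "V \<in> sets M" "emeas M V \<le> ereal \<delta>"
    have fin: "U \<in> fmeasurable M" "V \<in> fmeasurable M" "\<phi> U \<in> fmeasurable N" "\<phi> V \<in> fmeasurable N"
      using U V by (simp_all add: fmeasurable_if_emeas_le image)
    have fin_Int: "U \<inter> V \<in> fmeasurable M" "\<phi> U \<inter> \<phi> V \<in> fmeasurable N"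
      using fin by (simp_all add: fmeasurable_Int_fmeasurable fmeasurableD)
    obtain c where "c > 0"
      and "\<bar>emeas M U - ereal c * emeas N (\<phi> U)\<bar> \<le> ereal e * max (emeas M U) (emeas M V)"
      and "\<bar>emeas M V - ereal c * emeas N (\<phi> V)\<bar> \<le> ereal e * max (emeas M U) (emeas M V)"
      and "\<bar>emeas M (U \<inter> V) - ereal c * emeas N (\<phi> U \<inter> \<phi> V)\<bar> \<le> ereal e * max (emeas M U) (emeas M V)"
      using cal[OF U(1) V(1) U(2) V(2)] by blast
    then show "\<exists>c. calibrates M N \<phi> e U V c"
      unfolding calibrates_def by (simp add: fin fin_Int emeas_fmeasurable flip: ereal_max) blast
  qed
qed

lemma common_calibration:
  assumes "0 \<le> e" and "e \<le> 1/2"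
    and p: "p \<in> I" "\<And>l. l \<in> I \<Longrightarrow> measure M (A l) \<le> measure M (A p)"
    and image: "\<And>i. i \<in> I \<Longrightarrow> \<phi> (A i) \<in> fmeasurable N"
    and cal: "\<And>i j. i \<in> I \<Longrightarrow> j \<in> I \<Longrightarrow> \<exists>c. calibrates M N \<phi> e (A i) (A j) c"
  obtains c where "c > 0" and "\<And>i j. i \<in> I \<Longrightarrow> j \<in> I \<Longrightarrow>
    \<bar>measure M (A i \<inter> A j) - c * measure N (\<phi> (A i) \<inter> \<phi> (A j))\<bar> \<le> 9 * e * measure M (A p)"
proof -
  obtain c where c: "calibrates M N \<phi> e (A p) (A p) c" using cal p(1) by blast
  show thesis
  proof (rule that)
    show "c > 0" using c by (simp add: calibrates_def)
    fix i j assume i: "i \<in> I" and j: "j \<in> I"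
    obtain c' where c': "calibrates M N \<phi> e (A p) (A i) c'" using cal p(1) i by blast
    obtain c'' where c'': "calibrates M N \<phi> e (A i) (A j) c''" using cal i j by blast
    have "e * max (measure M (A i)) (measure M (A j)) \<le> e * measure M (A p)"
      using p(2)[OF i] p(2)[OF j] assms(1) by (simp add: mult_left_mono)
    moreover have "max (measure M (A p)) (measure M (A i)) = measure M (A p)"
      using p(2)[OF i] by simp
    moreover have "measure N (\<phi> (A i) \<inter> \<phi> (A j)) \<le> measure N (\<phi> (A i))"
      using image[OF i] image[OF j] by (intro measure_mono_fmeasurable) auto
    ultimately show "\<bar>measure M (A i \<inter> A j) - c * measure N (\<phi> (A i) \<inter> \<phi> (A j))\<bar>
        \<le> 9 * e * measure M (A p)"
      using c c' c'' p(2)[OF i] assms(2) unfolding calibrates_def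
      by (intro calibration_transfer[where a = "measure M (A i)" and x = "measure N (\<phi> (A i))"
            and p = "measure N (\<phi> (A p))" and c' = c' and c'' = c'']) auto
  qed
qed

lemma conformal_hom_finite_family:
  assumes "conformal_hom M N \<phi>" and "finite I" and "\<epsilon> > 0"
  obtains \<delta> where "\<delta> > 0"
    and "\<And>A. (\<And>i. i \<in> I \<Longrightarrow> A i \<in> sets M) \<Longrightarrow> (\<And>i. i \<in> I \<Longrightarrow> emeas M (A i) \<le> ereal \<delta>) \<Longrightarrow>
      \<exists>c>0. \<forall>i\<in>I. \<forall>j\<in>I. \<bar>emeas M (A i \<inter> A j) - ereal c * emeas N (\<phi> (A i) \<inter> \<phi> (A j))\<bar>
        \<le> ereal \<epsilon> * Max ((\<lambda>l. emeas M (A l)) ` I)"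
proof -
  define e where "e = min (\<epsilon> / 9) (1/2)"
  have e: "0 < e" "e \<le> 1/2" "9 * e \<le> \<epsilon>" using \<open>\<epsilon> > 0\<close> by (auto simp: e_def)
  obtain \<delta> where "\<delta> > 0" and image: "\<And>U. U \<in> sets M \<Longrightarrow> emeas M U \<le> ereal \<delta> \<Longrightarrow> \<phi> U \<in> fmeasurable N"
    and cal: "\<And>U V. U \<in> sets M \<Longrightarrow> V \<in> sets M \<Longrightarrow> emeas M U \<le> ereal \<delta> \<Longrightarrow> emeas M V \<le> ereal \<delta> \<Longrightarrow>
           \<exists>c. calibrates M N \<phi> e U V c"
    using conformal_hom_calibrates[OF assms(1) e(1)] by blast
  show thesis
  proof (rule that[OF \<open>\<delta> > 0\<close>])
    fix A assume sets: "\<And>i. i \<in> I \<Longrightarrow> A i \<in> sets M"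
      and small: "\<And>i. i \<in> I \<Longrightarrow> emeas M (A i) \<le> ereal \<delta>"
    have fin: "A i \<in> fmeasurable M" "\<phi> (A i) \<in> fmeasurable N" if "i \<in> I" for i
      using sets[OF that] small[OF that] by (simp_all add: fmeasurable_if_emeas_le image)
    show "\<exists>c>0. \<forall>i\<in>I. \<forall>j\<in>I. \<bar>emeas M (A i \<inter> A j) - ereal c * emeas N (\<phi> (A i) \<inter> \<phi> (A j))\<bar>
        \<le> ereal \<epsilon> * Max ((\<lambda>l. emeas M (A l)) ` I)"
    proof (cases "I = {}")
      case True
      then show ?thesis by (intro exI[of _ 1]) auto
    next
      case False
      then have "Max ((\<lambda>l. emeas M (A l)) ` I) \<in> (\<lambda>l. emeas M (A l)) ` I"
        using assms(2) by (intro Max_in) auto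
      then obtain p where p: "p \<in> I" and max_p: "Max ((\<lambda>l. emeas M (A l)) ` I) = emeas M (A p)"
        by blast
      have "measure M (A l) \<le> measure M (A p)" if "l \<in> I" for l
      proof -
        have "emeas M (A l) \<le> emeas M (A p)" using that assms(2) by (simp flip: max_p)
        then show ?thesis using fin(1) p that by (simp add: emeas_fmeasurable)
      qed
      moreover have "\<exists>c. calibrates M N \<phi> e (A i) (A j) c" if "i \<in> I" "j \<in> I" for i j
        using sets small that by (simp add: cal)
      ultimately obtain c where "c > 0" and bound: "\<And>i j. i \<in> I \<Longrightarrow> j \<in> I \<Longrightarrow>
          \<bar>measure M (A i \<inter> A j) - c * measure N (\<phi> (A i) \<inter> \<phi> (A j))\<bar> \<le> 9 * e * measure M (A p)"
        using common_calibration[of e p I] e p fin(2) by (metis less_imp_le)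
      have "9 * e * measure M (A p) \<le> \<epsilon> * measure M (A p)"
        using e(3) by (simp add: mult_right_mono)
      then have "\<bar>emeas M (A i \<inter> A j) - ereal c * emeas N (\<phi> (A i) \<inter> \<phi> (A j))\<bar>
          \<le> ereal \<epsilon> * emeas M (A p)" if "i \<in> I" "j \<in> I" for i j
        using bound[OF that] fin[OF that(1)] fin[OF that(2)] fin[OF p]
        by (simp add: emeas_fmeasurable fmeasurable_Int_fmeasurable fmeasurableD)
      then show ?thesis using \<open>c > 0\<close> max_p by auto
    qed
  qed
qed

theorem lemma4p3:
  fixes M :: "'a measure" and N :: "'b measure" and \<phi> :: "'a set \<Rightarrow> 'b set"
  assumes "sigma_finite_measure M" and "sigma_finite_measure N"
    and "conformal_hom M N \<phi>"
  shows "\<forall>k::nat. \<forall>\<epsilon>::real>0. \<exists>\<delta>::real>0. \<forall>A :: nat \<Rightarrow> 'a set.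
           (\<forall>i\<in>{1..k}. A i \<in> sets M \<and> emeas M (A i) \<le> ereal \<delta>) \<longrightarrow>
           (\<exists>c::real>0. \<forall>i\<in>{1..k}. \<forall>j\<in>{1..k}.
              \<bar>emeas M (A i \<inter> A j) - ereal c * emeas N (\<phi> (A i) \<inter> \<phi> (A j))\<bar>
                \<le> ereal \<epsilon> * Max ((\<lambda>l. emeas M (A l)) ` {1..k}))"
proof (intro allI impI)
  fix k :: nat and \<epsilon> :: real
  assume "\<epsilon> > 0"
  then obtain \<delta> where "\<delta> > 0" and family: "\<And>A. (\<And>i. i \<in> {1..k} \<Longrightarrow> A i \<in> sets M) \<Longrightarrow>
      (\<And>i. i \<in> {1..k} \<Longrightarrow> emeas M (A i) \<le> ereal \<delta>) \<Longrightarrow>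
      \<exists>c>0. \<forall>i\<in>{1..k}. \<forall>j\<in>{1..k}. \<bar>emeas M (A i \<inter> A j) - ereal c * emeas N (\<phi> (A i) \<inter> \<phi> (A j))\<bar>
        \<le> ereal \<epsilon> * Max ((\<lambda>l. emeas M (A l)) ` {1..k})"
    using conformal_hom_finite_family[OF assms(3) finite_atLeastAtMost] by blast
  then show "\<exists>\<delta>>0. \<forall>A. (\<forall>i\<in>{1..k}. A i \<in> sets M \<and> emeas M (A i) \<le> ereal \<delta>) \<longrightarrow>
      (\<exists>c>0. \<forall>i\<in>{1..k}. \<forall>j\<in>{1..k}.
        \<bar>emeas M (A i \<inter> A j) - ereal c * emeas N (\<phi> (A i) \<inter> \<phi> (A j))\<bar>
          \<le> ereal \<epsilon> * Max ((\<lambda>l. emeas M (A l)) ` {1..k}))"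
    by blast
qed

end
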